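(* Let $K$ be a field, let $L\in K^{n\times n}[s]$, $L_1\in K^{n_1\times n_1}[s]$ be nonsingular polynomial matrices, and let $\Theta,\Theta_1\in K^{n_1\times n}_\infty(s)$ satisfy $\Theta L=L_1\Theta_1$. Let $\phi:U^L\to U^{L_1}$ be defined by $\phi\bar x=\rho_e^{L_1}(\Theta\bar x)$, $\bar x\in U^L$. Then the dual map $\phi^*:U^{L_1^T}\to U^{L^T}$ of $\phi$ with respect to the pairings $\langle\cdot,\cdot\rangle_L$ and $\langle\cdot,\cdot\rangle_{L_1}$ is given by $$\phi^*\,\rho^{L_1^T}w=\rho^{L^T}(\Theta_1^Tw)\qquad\text{for all } w\in K^{n_1}_\infty(s).$$
   Context: $K(s)$ denotes the field of rational functions over $K$. A rational function $f$ is proper if $f=0$ or $f=p/q$ with $p,q\in K[s]$, $q\ne0$, $\deg p\le\deg q$; $K_\infty(s)$ is the ring of proper rational functions, and $K^n_\infty(s)$, $K^{m\times r}_\infty(s)$ denote vectors/matrices with proper rational entries. One has $K(s)=K[s]\oplus s^{-1}K_\infty(s)$; $\pi_+:K(s)\to K[s]$ denotes the projection onto the polynomial part along $s^{-1}K_\infty(s)$, extended entrywise to vectors and matrices, and $(f)_0=(\pi_+f)(0)$ (also entrywise). For a nonsingular $M\in K^{m\times m}[s]$, define $\rho^M:K^m_\infty(s)\to K^m[s]$ by $\rho^M x=M\,\pi_+(M^{-1}x)$, write $\bar x=\rho^Mx$, and let $U^M=\operatorname{Im}\rho^M$, a $K_\infty(s)$-module (and $K$-vector space) via $q\cdot\rho^Mx=\rho^M(qx)$.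 The extension $\rho_e^{L_1}$ is $\rho_e^{L_1}w=L_1\pi_+(L_1^{-1}w)$ for $w\in K^{n_1}(s)$. The bilinear form $\langle \rho^{M^T}y,\rho^Mx\rangle_M=(y^TM^{-1}x)_0$, $x,y\in K^m_\infty(s)$, is a well-defined nondegenerate $K$-bilinear pairing $U^{M^T}\times U^M\to K$. The dual map $\phi^*$ of a $K$-linear $\phi:U^L\to U^{L_1}$ is the $K$-linear map $U^{L_1^T}\to U^{L^T}$ with $\langle\phi^*\eta,\xi\rangle_L=\langle\eta,\phi\xi\rangle_{L_1}$ for all $\eta\in U^{L_1^T}$, $\xi\in U^L$. *)

theory Defs
  imports "HOL-Analysis.Analysis" "HOL-Computational_Algebra.Polynomial_Factorial"
begin

text \<open>Rational functions K(s) are modelled as the fraction field of K[s].\<close>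
type_synonym 'a ratf = "'a poly fract"

definition proper :: "'a::field ratf \<Rightarrow> bool" where
  "proper f \<longleftrightarrow> f = 0 \<or> (\<exists>p q. q \<noteq> 0 \<and> f = Fract p q \<and> degree p \<le> degree q)"

definition properv :: "'a::field ratf ^ 'm \<Rightarrow> bool" where
  "properv x \<longleftrightarrow> (\<forall>i. proper (x $ i))"

definition properm :: "'a::field ratf ^ 'n ^ 'm \<Rightarrow> bool" where
  "properm A \<longleftrightarrow> (\<forall>i j. proper (A $ i $ j))"

text \<open>Polynomial part pi_+ : the polynomial part of p/q is p div q (independent of the representation).\<close>
definition pplus :: "'a::field ratf \<Rightarrow> 'a poly" where
  "pplus f = (let pq = (SOME pq. snd pq \<noteq> 0 \<and> f = Fract (fst pq) (snd pq)) in fst pq div snd pq)"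

definition pplusv :: "'a::field ratf ^ 'm \<Rightarrow> 'a poly ^ 'm" where
  "pplusv x = (\<chi> i. pplus (x $ i))"

definition at0 :: "'a::field ratf \<Rightarrow> 'a" where
  "at0 f = poly (pplus f) 0"

definition liftv :: "'a::field poly ^ 'm \<Rightarrow> 'a ratf ^ 'm" where
  "liftv x = (\<chi> i. to_fract (x $ i))"

definition liftm :: "'a::field poly ^ 'n ^ 'm \<Rightarrow> 'a ratf ^ 'n ^ 'm" where
  "liftm M = (\<chi> i j. to_fract (M $ i $ j))"

text \<open>rho_e^M w = M pi_+(M^{-1} w) for arbitrary rational w; rho^M is its restriction to proper vectors.\<close>
definition rho_e :: "'a::field poly ^ 'm ^ 'm \<Rightarrow> 'a ratf ^ 'm \<Rightarrow> 'a poly ^ 'm" where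
  "rho_e M w = M *v pplusv (matrix_inv (liftm M) *v w)"

definition rho :: "'a::field poly ^ 'm ^ 'm \<Rightarrow> 'a ratf ^ 'm \<Rightarrow> 'a poly ^ 'm" where
  "rho M x = rho_e M x"

definition U :: "'a::field poly ^ 'm ^ 'm \<Rightarrow> ('a poly ^ 'm) set" where
  "U M = rho M ` {x. properv x}"

definition ksmult :: "'a::field \<Rightarrow> 'a poly ^ 'm \<Rightarrow> 'a poly ^ 'm" where
  "ksmult c v = (\<chi> i. smult c (v $ i))"

text \<open>The pairing <rho^{M^T} y, rho^M x>_M = (y^T M^{-1} x)_0 on U^{M^T} x U^M
  (well defined by the context; here defined through chosen representatives).\<close>
definition pairing :: "'a::field poly ^ 'm ^ 'm \<Rightarrow> 'a poly ^ 'm \<Rightarrow> 'a poly ^ 'm \<Rightarrow> 'a" where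
  "pairing M \<eta> \<xi> = (SOME c. \<exists>x y. properv x \<and> properv y \<and>
      \<eta> = rho (transpose M) y \<and> \<xi> = rho M x \<and>
      c = at0 (\<Sum>i\<in>UNIV. y $ i * (matrix_inv (liftm M) *v x) $ i))"

definition is_dual_map ::
  "'a::field poly ^ 'n ^ 'n \<Rightarrow> 'a poly ^ 'm ^ 'm \<Rightarrow> ('a poly ^ 'n \<Rightarrow> 'a poly ^ 'm)
     \<Rightarrow> ('a poly ^ 'm \<Rightarrow> 'a poly ^ 'n) \<Rightarrow> bool" where
  "is_dual_map L L1 \<phi> \<psi> \<longleftrightarrow>
     (\<forall>\<eta>\<in>U (transpose L1). \<psi> \<eta> \<in> U (transpose L)) \<and>
     (\<forall>a b \<eta> \<eta>'. \<eta> \<in> U (transpose L1) \<longrightarrow> \<eta>' \<in> U (transpose L1) \<longrightarrow>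
        \<psi> (ksmult a \<eta> + ksmult b \<eta>') = ksmult a (\<psi> \<eta>) + ksmult b (\<psi> \<eta>')) \<and>
     (\<forall>\<eta>\<in>U (transpose L1). \<forall>\<xi>\<in>U L. pairing L (\<psi> \<eta>) \<xi> = pairing L1 \<eta> (\<phi> \<xi>))"

end

theory Submission
  imports Defs
begin

text \<open>
  The pairing \<open>(y\<^sup>T M\<^sup>-\<^sup>1 x)\<^sub>0\<close> only depends on \<open>\<rho>\<^sup>M x\<close> and \<open>\<rho>\<^sup>M\<^sup>T y\<close>, because \<open>(\<cdot>)\<^sub>0\<close> kills
  every product of a proper and a strictly proper function, and it is nondegenerate, because
  pairing against \<open>x = e\<^sub>i s\<^sup>-\<^sup>k\<close> reads off the \<open>k\<close>-th coefficient of the polynomial part of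
  the \<open>i\<close>-th entry. The relation \<open>\<Theta> L = L\<^sub>1 \<Theta>\<^sub>1\<close> gives \<open>\<Theta>\<^sub>1 L\<^sup>-\<^sup>1 = L\<^sub>1\<^sup>-\<^sup>1 \<Theta>\<close>, hence
  \<open>\<phi> (\<rho>\<^sup>L x) = \<rho>\<^sup>L\<^sup>1 (\<Theta> x)\<close> and
  \<open>(w\<^sup>T \<Theta>\<^sub>1 L\<^sup>-\<^sup>1 x)\<^sub>0 = (w\<^sup>T L\<^sub>1\<^sup>-\<^sup>1 \<Theta> x)\<^sub>0\<close>, i.e. pairing \<open>\<rho>\<^sup>L\<^sup>T (\<Theta>\<^sub>1\<^sup>T w)\<close> against \<open>\<rho>\<^sup>L x\<close>
  gives the same value as pairing \<open>\<rho>\<^sup>L\<^sup>1\<^sup>T w\<close> against \<open>\<phi> (\<rho>\<^sup>L x)\<close>. By nondegeneracy,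
  \<open>\<rho>\<^sup>L\<^sup>T (\<Theta>\<^sub>1\<^sup>T w)\<close> then depends only on \<open>\<rho>\<^sup>L\<^sup>1\<^sup>T w\<close>, the resulting map is a dual of \<open>\<phi>\<close>,
  and it is the only one.
\<close>

section \<open>The polynomial part\<close>

lemma pplus_Fract:
  fixes p q :: "'a::field poly"
  assumes "q \<noteq> 0"
  shows "pplus (Fract p q) = p div q"
proof -
  define pq where "pq = (SOME pq. snd pq \<noteq> 0 \<and> Fract p q = Fract (fst pq) (snd pq))"
  have "snd pq \<noteq> 0 \<and> Fract p q = Fract (fst pq) (snd pq)"
    unfolding pq_def by (rule someI[of _ "(p, q)"]) (use assms in simp)
  then have pq: "snd pq \<noteq> 0" "p * snd pq = fst pq * q"
    using assms eq_fract(1) by blast+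
  have "fst pq div snd pq = (fst pq * q) div (snd pq * q)"
    using assms by simp
  also have "\<dots> = (p * snd pq) div (q * snd pq)"
    using pq by (simp add: mult.commute)
  also have "\<dots> = p div q"
    using pq(1) by simp
  finally show ?thesis
    unfolding pplus_def pq_def[symmetric] Let_def .
qed

lemma pplus_to_fract [simp]: "pplus (to_fract p) = (p :: 'a::field poly)"
  by (simp add: to_fract_def pplus_Fract)

lemma pplus_0 [simp]: "pplus 0 = (0 :: 'a::field poly)"
  using pplus_to_fract[of 0] by simp

lemma pplus_add: "pplus (f + g) = pplus f + pplus (g :: 'a::field ratf)"
proof -
  obtain p q p' q' where "q \<noteq> 0" "f = Fract p q" "q' \<noteq> 0" "g = Fract p' q'"
    by (cases f, cases g) auto
  then show ?thesis
    by (simp add: pplus_Fract poly_div_add_left mult.commute)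
qed

lemma pplus_diff: "pplus (f - g) = pplus f - pplus (g :: 'a::field ratf)"
proof -
  obtain p q p' q' where "q \<noteq> 0" "f = Fract p q" "q' \<noteq> 0" "g = Fract p' q'"
    by (cases f, cases g) auto
  then show ?thesis
    by (simp add: pplus_Fract poly_div_diff_left mult.commute)
qed

lemma pplus_sum: "pplus (sum f A) = (\<Sum>i\<in>A. pplus (f i :: 'a::field ratf))"
  by (induction A rule: infinite_finite_induct) (auto simp: pplus_add)

definition fract_const :: "'a::field \<Rightarrow> 'a ratf" where
  "fract_const c = to_fract [:c:]"

lemma pplus_fract_const_mult: "pplus (fract_const c * f) = smult c (pplus (f :: 'a::field ratf))"
  by (cases f) (simp add: fract_const_def to_fract_def pplus_Fract div_smult_left)

lemma at0_diff: "at0 (f - g) = at0 f - at0 (g :: 'a::field ratf)"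
  by (simp add: at0_def pplus_diff)

lemma coeff_div_monom_0: "coeff (p div monom 1 k) 0 = coeff (p :: 'a::field poly) k"
proof -
  have "coeff (p mod monom 1 k) k = 0"
    using degree_mod_less'[of "monom 1 k" p]
    by (cases "p mod monom 1 k = 0") (auto simp: degree_monom_eq coeff_eq_0)
  then have "coeff p k = coeff (monom 1 k * (p div monom 1 k)) k"
    by (metis add.right_neutral coeff_add div_mult_mod_eq mult.commute)
  then show ?thesis
    by (simp add: coeff_monom_mult)
qed

lemma at0_mult_Fract_monom: "at0 (f * Fract 1 (monom 1 k)) = coeff (pplus (f :: 'a::field ratf)) k"
proof -
  obtain p q where "q \<noteq> 0" "f = Fract p q"
    by (cases f) auto
  moreover have "monom 1 k \<noteq> (0 :: 'a poly)"
    by simp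
  ultimately have "pplus (f * Fract 1 (monom 1 k)) = (p div q) div monom 1 k"
    by (simp add: pplus_Fract poly_div_mult_right)
  with \<open>q \<noteq> 0\<close> \<open>f = Fract p q\<close> show ?thesis
    by (simp add: at0_def pplus_Fract coeff_div_monom_0 poly_0_coeff_0)
qed

section \<open>Proper rational functions\<close>

lemma proper_iff: "proper f \<longleftrightarrow> (\<exists>p q. q \<noteq> 0 \<and> f = Fract p q \<and> degree p \<le> degree (q :: 'a::field poly))"
  unfolding proper_def by (metis Zero_fract_def degree_0 le0 one_neq_zero)

lemma proper_0 [simp]: "proper 0"
  by (simp add: proper_def)

lemma proper_add:
  assumes "proper f" "proper (g :: 'a::field ratf)"
  shows "proper (f + g)"
proof -
  obtain p q p' q' where a: "q \<noteq> 0" "f = Fract p q" "degree p \<le> degree q"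
    and b: "q' \<noteq> 0" "g = Fract p' q'" "degree p' \<le> degree q'"
    using assms unfolding proper_iff by blast
  have "degree (p * q' + p' * q) \<le> degree (q * q')"
    using a b by (intro degree_add_le order.trans[OF degree_mult_le]) (auto simp: degree_mult_eq)
  then show ?thesis
    using a b unfolding proper_iff by (intro exI[of _ "p * q' + p' * q"] exI[of _ "q * q'"]) auto
qed

lemma proper_mult:
  assumes "proper f" "proper (g :: 'a::field ratf)"
  shows "proper (f * g)"
proof -
  obtain p q p' q' where a: "q \<noteq> 0" "f = Fract p q" "degree p \<le> degree q"
    and b: "q' \<noteq> 0" "g = Fract p' q'" "degree p' \<le> degree q'"
    using assms unfolding proper_iff by blast
  have "degree (p * p') \<le> degree (q * q')"
    using a b order.trans[OF degree_mult_le[of p p']] by (simp add: degree_mult_eq)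
  then show ?thesis
    using a b unfolding proper_iff by (intro exI[of _ "p * p'"] exI[of _ "q * q'"]) auto
qed

lemma proper_sum: "(\<And>i. i \<in> A \<Longrightarrow> proper (f i)) \<Longrightarrow> proper (sum f A :: 'a::field ratf)"
  by (induction A rule: infinite_finite_induct) (auto intro: proper_add)

lemma proper_fract_const: "proper (fract_const c :: 'a::field ratf)"
  unfolding proper_iff fract_const_def to_fract_def by (intro exI[of _ "[:c:]"] exI[of _ 1]) auto

lemma proper_Fract_monom: "proper (Fract 1 (monom 1 k) :: 'a::field ratf)"
  unfolding proper_iff by (intro exI[of _ 1] exI[of _ "monom 1 k"]) (auto simp: degree_monom_eq)

text \<open>Strictly proper functions are those with \<open>pplus g = 0\<close>.\<close>

lemma pplus_mult_eq_0:
  assumes "proper f" "pplus (g :: 'a::field ratf) = 0"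
  shows "pplus (f * g) = 0"
proof -
  obtain p q where a: "q \<noteq> 0" "f = Fract p q" "degree p \<le> degree q"
    using assms(1) unfolding proper_iff by blast
  obtain p' q' where b: "q' \<noteq> 0" "g = Fract p' q'"
    by (cases g) auto
  have "p' = 0 \<or> degree p' < degree q'"
    using assms(2) b by (simp add: pplus_Fract div_poly_eq_0_iff)
  then have "p * p' = 0 \<or> degree (p * p') < degree (q * q')"
    using a b by (cases "p = 0"; cases "p' = 0") (auto simp: degree_mult_eq)
  then show ?thesis
    using a b by (auto simp: pplus_Fract div_poly_eq_0_iff)
qed

lemma properv_mult: "properm A \<Longrightarrow> properv x \<Longrightarrow> properv (A *v x)"
  by (auto simp: properm_def properv_def matrix_vector_mult_def intro!: proper_sum proper_mult)

lemma properm_transpose: "properm A \<Longrightarrow> properm (transpose A)"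
  by (simp add: properm_def transpose_def)

lemma pplusv_mult_eq_0:
  assumes "properm A" "pplusv d = 0"
  shows "pplusv (A *v d) = (0 :: 'a::field poly ^ 'm)"
  using assms
  by (simp add: pplusv_def vec_eq_iff matrix_vector_mult_def pplus_sum pplus_mult_eq_0 properm_def)

lemma at0_sum_mult_eq_0:
  assumes "properv a" "pplusv b = 0"
  shows "at0 (\<Sum>i\<in>UNIV. a $ i * b $ i :: 'a::field ratf) = 0"
  using assms by (simp add: at0_def pplus_sum pplus_mult_eq_0 properv_def pplusv_def vec_eq_iff)

declare transpose_matrix_vector [simp del]

abbreviation Minv :: "'a::field poly ^ 'n ^ 'n \<Rightarrow> 'a ratf ^ 'n ^ 'n" where
  "Minv M \<equiv> matrix_inv (liftm M)"

lemma det_liftm: "det (liftm M) = to_fract (det (M :: 'a::field poly ^ 'n ^ 'n))"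
proof -
  have "to_fract (prod f A) = (\<Prod>x\<in>A. to_fract (f x))" for f :: "'n \<Rightarrow> 'a poly" and A
    by (induction A rule: infinite_finite_induct) auto
  then show ?thesis
    unfolding det_def liftm_def by (auto simp: sign_def intro!: sum.cong)
qed

lemma liftm_Minv:
  assumes "det (M :: 'a::field poly ^ 'n ^ 'n) \<noteq> 0"
  shows "liftm M ** Minv M = mat 1" and "Minv M ** liftm M = mat 1"
proof -
  have "invertible (liftm M)"
    using assms by (simp add: invertible_det_nz det_liftm)
  then have "liftm M ** Minv M = mat 1 \<and> Minv M ** liftm M = mat 1"
    unfolding invertible_def matrix_inv_def by (rule someI_ex)
  then show "liftm M ** Minv M = mat 1" "Minv M ** liftm M = mat 1"
    by auto
qed

lemma Minv_transpose:
  assumes "det (M :: 'a::field poly ^ 'n ^ 'n) \<noteq> 0"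
  shows "Minv (transpose M) = transpose (Minv M)"
proof -
  have liftm_transpose: "liftm (transpose M) = transpose (liftm M)"
    by (simp add: liftm_def transpose_def vec_eq_iff)
  have "transpose (Minv M) ** liftm (transpose M) = mat 1"
    by (simp add: liftm_transpose matrix_transpose_mul[symmetric] liftm_Minv(1)[OF assms])
  then have "Minv (transpose M) = (transpose (Minv M) ** liftm (transpose M)) ** Minv (transpose M)"
    by simp
  also have "\<dots> = transpose (Minv M)"
    using assms by (simp add: matrix_mul_assoc[symmetric] liftm_Minv)
  finally show ?thesis .
qed

lemma liftv_mult: "liftv (M *v p) = liftm M *v liftv p"
  by (simp add: liftv_def liftm_def matrix_vector_mult_def vec_eq_iff)

lemma matrix_vector_mult_eq_0_iff:
  assumes "det (M :: 'a::field poly ^ 'n ^ 'n) \<noteq> 0"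
  shows "M *v p = 0 \<longleftrightarrow> p = 0"
proof
  assume "M *v p = 0"
  then have "liftv (M *v p) = 0"
    by (simp add: liftv_def vec_eq_iff)
  have "liftv p = Minv M *v liftv (M *v p)"
    by (simp add: liftv_mult matrix_vector_mul_assoc liftm_Minv(2)[OF assms])
  also have "\<dots> = 0"
    using \<open>liftv (M *v p) = 0\<close> by simp
  finally show "p = 0"
    by (auto simp: liftv_def vec_eq_iff)
qed simp

lemma sum_mult_matrix_vector:
  fixes A :: "'a::comm_ring_1 ^ 'n ^ 'm"
  shows "(\<Sum>i\<in>UNIV. y $ i * (A *v x) $ i) = (\<Sum>i\<in>UNIV. (transpose A *v y) $ i * x $ i)"
  unfolding matrix_vector_mult_def transpose_def
  by (simp add: sum_distrib_left sum_distrib_right mult.assoc mult.left_commute) (rule sum.swap)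

lemma matrix_vector_mult_scalar: "A *v (c *s v) = c *s (A *v v)" for A :: "'a::comm_ring_1 ^ 'n ^ 'm"
  by (simp add: vector_scalar_mult_def matrix_vector_mult_def mult_ac sum_distrib_left)

lemma ksmult_eq_scalar: "ksmult c v = [:c:] *s v"
  by (simp add: ksmult_def vec_eq_iff)

section \<open>The map \<open>\<rho>\<close> and the pairing\<close>

lemma pplusv_diff: "pplusv (a - b) = pplusv a - pplusv (b :: 'a::field ratf ^ 'n)"
  by (simp add: pplusv_def vec_eq_iff pplus_diff)

lemma rho_diff: "rho M a - rho M b = M *v pplusv (Minv M *v (a - b))"
  by (simp add: rho_def rho_e_def pplusv_diff matrix_vector_mult_diff_distrib)

lemma rho_eq_iff:
  assumes "det (M :: 'a::field poly ^ 'n ^ 'n) \<noteq> 0"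
  shows "rho M a = rho M b \<longleftrightarrow> pplusv (Minv M *v (a - b)) = 0"
proof -
  have "rho M a = rho M b \<longleftrightarrow> M *v pplusv (Minv M *v (a - b)) = 0"
    unfolding rho_diff[symmetric] by (rule eq_iff_diff_eq_0)
  also have "\<dots> \<longleftrightarrow> pplusv (Minv M *v (a - b)) = 0"
    by (rule matrix_vector_mult_eq_0_iff[OF assms])
  finally show ?thesis .
qed

lemma pplusv_linear:
  "pplusv (fract_const a *s u + fract_const b *s v) = ksmult a (pplusv u) + ksmult b (pplusv v)"
  by (simp add: pplusv_def ksmult_def vec_eq_iff pplus_add pplus_fract_const_mult)

lemma rho_linear:
  "rho M (fract_const a *s u + fract_const b *s v) = ksmult a (rho M u) + ksmult b (rho M v)"
  by (simp add: rho_def rho_e_def matrix_vector_right_distrib matrix_vector_mult_scalar pplusv_linear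
      ksmult_eq_scalar)

lemma properv_linear: "properv u \<Longrightarrow> properv v \<Longrightarrow> properv (fract_const a *s u + fract_const b *s v)"
  by (simp add: properv_def proper_add proper_mult proper_fract_const)

definition pairing_form :: "'a::field poly ^ 'n ^ 'n \<Rightarrow> 'a ratf ^ 'n \<Rightarrow> 'a ratf ^ 'n \<Rightarrow> 'a" where
  "pairing_form M y x = at0 (\<Sum>i\<in>UNIV. y $ i * (Minv M *v x) $ i)"

lemma pairing_form_transpose:
  assumes "det (M :: 'a::field poly ^ 'n ^ 'n) \<noteq> 0"
  shows "pairing_form M y x = pairing_form (transpose M) x y"
proof -
  have "(\<Sum>i\<in>UNIV. x $ i * (transpose (Minv M) *v y) $ i)
      = (\<Sum>i\<in>UNIV. (transpose (Minv M) *v y) $ i * x $ i)"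
    by (simp add: mult.commute)
  also have "\<dots> = (\<Sum>i\<in>UNIV. y $ i * (Minv M *v x) $ i)"
    by (rule sum_mult_matrix_vector[symmetric])
  finally show ?thesis
    by (simp add: pairing_form_def Minv_transpose[OF assms])
qed

lemma pairing_form_diff_left: "pairing_form M (y - y') x = pairing_form M y x - pairing_form M y' x"
  by (simp add: pairing_form_def at0_diff[symmetric] sum_subtractf[symmetric] left_diff_distrib)

lemma pairing_form_diff_right: "pairing_form M y (x - x') = pairing_form M y x - pairing_form M y x'"
  by (simp add: pairing_form_def at0_diff[symmetric] sum_subtractf[symmetric]
      matrix_vector_mult_diff_distrib right_diff_distrib)

lemma pairing_form_eq_0:
  assumes "det (M :: 'a::field poly ^ 'n ^ 'n) \<noteq> 0" "properv y" "rho M x = rho M x'"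
  shows "pairing_form M y (x - x') = 0"
  unfolding pairing_form_def
  by (rule at0_sum_mult_eq_0[OF assms(2)]) (use assms in \<open>simp add: rho_eq_iff\<close>)

lemma pairing_form_cong:
  assumes M: "det (M :: 'a::field poly ^ 'n ^ 'n) \<noteq> 0"
    and "properv x" "properv y'"
    and "rho M x = rho M x'" and "rho (transpose M) y = rho (transpose M) y'"
  shows "pairing_form M y x = pairing_form M y' x'"
proof -
  have Mt: "det (transpose M) \<noteq> 0"
    using M by simp
  have "pairing_form M y x - pairing_form M y' x = pairing_form (transpose M) x (y - y')"
    by (simp add: pairing_form_diff_right pairing_form_transpose[OF M])
  also have "\<dots> = 0"
    by (rule pairing_form_eq_0[OF Mt]) (use assms in auto)
  finally have "pairing_form M y x = pairing_form M y' x"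
    by simp
  moreover have "pairing_form M y' x - pairing_form M y' x' = pairing_form M y' (x - x')"
    by (simp add: pairing_form_diff_right)
  moreover have "\<dots> = 0"
    by (rule pairing_form_eq_0[OF M]) (use assms in auto)
  ultimately show ?thesis
    by simp
qed

lemma pairing_rho:
  assumes "det (M :: 'a::field poly ^ 'n ^ 'n) \<noteq> 0" "properv x" "properv y"
  shows "pairing M (rho (transpose M) y) (rho M x) = pairing_form M y x"
  unfolding pairing_def
proof (rule some_equality)
  show "\<exists>x' y'. properv x' \<and> properv y' \<and> rho (transpose M) y = rho (transpose M) y'
      \<and> rho M x = rho M x' \<and> pairing_form M y x = at0 (\<Sum>i\<in>UNIV. y' $ i * (Minv M *v x') $ i)"
    using assms by (intro exI[of _ x] exI[of _ y]) (simp add: pairing_form_def)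
next
  fix c assume "\<exists>x' y'. properv x' \<and> properv y' \<and> rho (transpose M) y = rho (transpose M) y'
      \<and> rho M x = rho M x' \<and> c = at0 (\<Sum>i\<in>UNIV. y' $ i * (Minv M *v x') $ i)"
  then obtain x' y' where x': "properv x'" "rho M x = rho M x'"
    and y': "rho (transpose M) y = rho (transpose M) y'" and c: "c = pairing_form M y' x'"
    unfolding pairing_form_def by blast
  show "c = pairing_form M y x"
    unfolding c by (rule pairing_form_cong[OF assms(1) x'(1) assms(3) x'(2)[symmetric] y'[symmetric]])
qed

text \<open>Pairing with \<open>e\<^sub>i s\<^sup>-\<^sup>k\<close> extracts the \<open>k\<close>-th coefficient of the \<open>i\<close>-th entry of \<open>\<pi>\<^sub>+\<close>.\<close>

lemma pplusv_eq_0_if_at0_sum_mult_eq_0: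
  assumes "\<And>x. properv x \<Longrightarrow> at0 (\<Sum>i\<in>UNIV. u $ i * x $ i) = (0 :: 'a::field)"
  shows "pplusv u = 0"
proof -
  have "coeff (pplus (u $ i)) k = 0" for i k
  proof -
    define x where "x = (\<chi> j. if j = i then Fract 1 (monom 1 k) else (0 :: 'a ratf))"
    have "properv x"
      by (simp add: x_def properv_def proper_Fract_monom)
    moreover have "(\<Sum>j\<in>UNIV. u $ j * x $ j) = u $ i * Fract 1 (monom 1 k)"
      by (simp add: x_def if_distrib cong: if_cong)
    ultimately show ?thesis
      using assms by (metis at0_mult_Fract_monom)
  qed
  then show ?thesis
    by (simp add: pplusv_def vec_eq_iff poly_eq_iff)
qed

lemma pairing_nondegenerate:
  assumes M: "det (M :: 'a::field poly ^ 'n ^ 'n) \<noteq> 0"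
    and "\<eta> \<in> U (transpose M)" "\<eta>' \<in> U (transpose M)"
    and eq: "\<And>\<xi>. \<xi> \<in> U M \<Longrightarrow> pairing M \<eta> \<xi> = pairing M \<eta>' \<xi>"
  shows "\<eta> = \<eta>'"
proof -
  obtain y y' where y: "properv y" "\<eta> = rho (transpose M) y"
    and y': "properv y'" "\<eta>' = rho (transpose M) y'"
    using assms(2,3) by (auto simp: U_def)
  have "at0 (\<Sum>i\<in>UNIV. (Minv (transpose M) *v (y - y')) $ i * x $ i) = 0" if "properv x" for x
  proof -
    have "at0 (\<Sum>i\<in>UNIV. (Minv (transpose M) *v (y - y')) $ i * x $ i) = pairing_form M (y - y') x"
      unfolding pairing_form_def Minv_transpose[OF M] sum_mult_matrix_vector ..
    also have "\<dots> = pairing M \<eta> (rho M x) - pairing M \<eta>' (rho M x)"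
      using \<open>properv x\<close> y y' by (simp add: pairing_form_diff_left pairing_rho[OF M])
    also have "\<dots> = 0"
      using eq[of "rho M x"] \<open>properv x\<close> by (simp add: U_def)
    finally show ?thesis .
  qed
  then show ?thesis
    using y y' M by (simp add: rho_eq_iff pplusv_eq_0_if_at0_sum_mult_eq_0)
qed

lemma dual_map_unique:
  assumes "det L \<noteq> 0" "is_dual_map L L1 \<phi> \<psi>" "is_dual_map L L1 \<phi> \<psi>'" "\<eta> \<in> U (transpose L1)"
  shows "\<psi> \<eta> = \<psi>' \<eta>"
  using assms by (intro pairing_nondegenerate[of L]) (auto simp: is_dual_map_def)

section \<open>The dual of \<open>\<phi>\<close>\<close>

locale intertwining =
  fixes L :: "'a::field poly ^ 'n ^ 'n" and L1 :: "'a poly ^ 'm ^ 'm"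
    and \<Theta> \<Theta>1 :: "'a ratf ^ 'n ^ 'm"
  assumes det_L: "det L \<noteq> 0" and det_L1: "det L1 \<noteq> 0"
    and proper_\<Theta>: "properm \<Theta>" and proper_\<Theta>1: "properm \<Theta>1"
    and intertwines: "\<Theta> ** liftm L = liftm L1 ** \<Theta>1"
begin

lemma Minv_intertwines: "\<Theta>1 ** Minv L = Minv L1 ** \<Theta>"
proof -
  have "Minv L1 ** \<Theta> = (Minv L1 ** \<Theta>) ** (liftm L ** Minv L)"
    by (simp add: liftm_Minv(1)[OF det_L])
  also have "\<dots> = Minv L1 ** (\<Theta> ** liftm L) ** Minv L"
    by (simp add: matrix_mul_assoc)
  also have "\<dots> = (Minv L1 ** liftm L1) ** \<Theta>1 ** Minv L"
    by (simp add: intertwines matrix_mul_assoc)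
  also have "\<dots> = \<Theta>1 ** Minv L"
    by (simp add: liftm_Minv(2)[OF det_L1])
  finally show ?thesis ..
qed

text \<open>\<open>\<rho>\<^sup>L x\<close> differs from \<open>x\<close> by \<open>L d\<close> with \<open>d\<close> strictly proper, and \<open>\<Theta> L d = L\<^sub>1 \<Theta>\<^sub>1 d\<close>
  with \<open>\<Theta>\<^sub>1 d\<close> again strictly proper.\<close>

lemma rho_e_Theta_rho: "rho_e L1 (\<Theta> *v liftv (rho L x)) = rho L1 (\<Theta> *v x)"
proof -
  define q where "q = Minv L *v x"
  define d where "d = q - liftv (pplusv q)"
  have "liftv (rho L x) = liftm L *v liftv (pplusv q)"
    by (simp add: rho_def rho_e_def liftv_mult q_def)
  also have "\<dots> = x - liftm L *v d"
    by (simp add: d_def q_def matrix_vector_mult_diff_distrib matrix_vector_mul_assoc liftm_Minv(1)[OF det_L])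
  finally have "\<Theta> *v liftv (rho L x) = \<Theta> *v x - liftm L1 *v (\<Theta>1 *v d)"
    by (simp add: matrix_vector_mult_diff_distrib matrix_vector_mul_assoc intertwines)
  then have "Minv L1 *v (\<Theta> *v liftv (rho L x)) = Minv L1 *v (\<Theta> *v x) - \<Theta>1 *v d"
    by (simp add: matrix_vector_mult_diff_distrib matrix_vector_mul_assoc matrix_mul_assoc
        liftm_Minv(2)[OF det_L1])
  moreover have "pplusv (\<Theta>1 *v d) = 0"
    by (rule pplusv_mult_eq_0[OF proper_\<Theta>1]) (simp add: d_def liftv_def pplusv_def pplus_diff vec_eq_iff)
  ultimately show ?thesis
    by (simp add: rho_def rho_e_def pplusv_diff)
qed

lemma pairing_rho_transpose_Theta1:
  assumes "properv w" "properv x"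
  shows "pairing L (rho (transpose L) (transpose \<Theta>1 *v w)) (rho L x)
       = pairing L1 (rho (transpose L1) w) (rho_e L1 (\<Theta> *v liftv (rho L x)))"
proof -
  have "pairing L (rho (transpose L) (transpose \<Theta>1 *v w)) (rho L x)
      = at0 (\<Sum>i\<in>UNIV. w $ i * (\<Theta>1 *v (Minv L *v x)) $ i)"
    using assms proper_\<Theta>1
    by (simp add: pairing_rho[OF det_L] properv_mult properm_transpose pairing_form_def
        sum_mult_matrix_vector)
  also have "\<dots> = pairing_form L1 w (\<Theta> *v x)"
    by (simp add: pairing_form_def matrix_vector_mul_assoc Minv_intertwines)
  also have "\<dots> = pairing L1 (rho (transpose L1) w) (rho_e L1 (\<Theta> *v liftv (rho L x)))"
    using assms proper_\<Theta> by (simp add: pairing_rho[OF det_L1] properv_mult rho_e_Theta_rho)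
  finally show ?thesis .
qed

text \<open>The representative picked by \<open>SOME\<close> is irrelevant, see \<open>dual_map_rho\<close>.\<close>

definition dual_map :: "'a poly ^ 'm \<Rightarrow> 'a poly ^ 'n" where
  "dual_map \<eta> = rho (transpose L) (transpose \<Theta>1 *v (SOME w. properv w \<and> \<eta> = rho (transpose L1) w))"

lemma dual_map_rho:
  assumes "properv w"
  shows "dual_map (rho (transpose L1) w) = rho (transpose L) (transpose \<Theta>1 *v w)"
proof -
  define w' where "w' = (SOME w'. properv w' \<and> rho (transpose L1) w = rho (transpose L1) w')"
  have w': "properv w'" "rho (transpose L1) w = rho (transpose L1) w'"
    using someI[of "\<lambda>w'. properv w' \<and> rho (transpose L1) w = rho (transpose L1) w'", OF conjI[OF assms refl]]
    by (simp_all add: w'_def)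
  have "rho (transpose L) (transpose \<Theta>1 *v w') = rho (transpose L) (transpose \<Theta>1 *v w)"
  proof (rule pairing_nondegenerate[OF det_L])
    have "rho (transpose L) (transpose \<Theta>1 *v v) \<in> U (transpose L)" if "properv v" for v
      using that proper_\<Theta>1 by (auto simp: U_def properv_mult properm_transpose)
    then show "rho (transpose L) (transpose \<Theta>1 *v w') \<in> U (transpose L)"
      "rho (transpose L) (transpose \<Theta>1 *v w) \<in> U (transpose L)"
      using assms w' by auto
  next
    fix \<xi> assume "\<xi> \<in> U L"
    then show "pairing L (rho (transpose L) (transpose \<Theta>1 *v w')) \<xi>
             = pairing L (rho (transpose L) (transpose \<Theta>1 *v w)) \<xi>"
      using assms w' by (auto simp: U_def pairing_rho_transpose_Theta1)
  qed
  then show ?thesis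
    by (simp add: dual_map_def w'_def)
qed

lemma is_dual_map_dual_map: "is_dual_map L L1 (\<lambda>\<xi>. rho_e L1 (\<Theta> *v liftv \<xi>)) dual_map"
  unfolding is_dual_map_def
proof (intro conjI ballI allI impI)
  fix \<eta> assume "\<eta> \<in> U (transpose L1)"
  then show "dual_map \<eta> \<in> U (transpose L)"
    using proper_\<Theta>1 by (auto simp: U_def dual_map_rho properv_mult properm_transpose)
next
  fix a b \<eta> \<eta>' assume "\<eta> \<in> U (transpose L1)" "\<eta>' \<in> U (transpose L1)"
  then obtain w w' where "properv w" "\<eta> = rho (transpose L1) w" "properv w'" "\<eta>' = rho (transpose L1) w'"
    by (auto simp: U_def)
  then show "dual_map (ksmult a \<eta> + ksmult b \<eta>') = ksmult a (dual_map \<eta>) + ksmult b (dual_map \<eta>')"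
    by (simp flip: rho_linear add: dual_map_rho properv_linear matrix_vector_right_distrib
        matrix_vector_mult_scalar)
next
  fix \<eta> \<xi> assume "\<eta> \<in> U (transpose L1)" "\<xi> \<in> U L"
  then show "pairing L (dual_map \<eta>) \<xi> = pairing L1 \<eta> (rho_e L1 (\<Theta> *v liftv \<xi>))"
    by (auto simp: U_def dual_map_rho pairing_rho_transpose_Theta1)
qed

end

theorem theorem3p4:
  fixes L :: "'K::field poly ^ 'n ^ 'n" and L1 :: "'K poly ^ 'm ^ 'm"
    and \<Theta> \<Theta>1 :: "'K ratf ^ 'n ^ 'm"
    and \<phi> :: "'K poly ^ 'n \<Rightarrow> 'K poly ^ 'm"
  assumes "det L \<noteq> 0" and "det L1 \<noteq> 0"
    and "properm \<Theta>" and "properm \<Theta>1"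
    and "\<Theta> ** liftm L = liftm L1 ** \<Theta>1"
    and "\<phi> = (\<lambda>\<xi>. rho_e L1 (\<Theta> *v liftv \<xi>))"
  shows "(\<exists>\<psi>. is_dual_map L L1 \<phi> \<psi>) \<and>
         (\<forall>\<psi>. is_dual_map L L1 \<phi> \<psi> \<longrightarrow>
            (\<forall>w. properv w \<longrightarrow> \<psi> (rho (transpose L1) w) = rho (transpose L) (transpose \<Theta>1 *v w)))"
proof -
  interpret intertwining L L1 \<Theta> \<Theta>1
    using assms(1-5) by unfold_locales
  have dual: "is_dual_map L L1 \<phi> dual_map"
    using is_dual_map_dual_map assms(6) by simp
  have "\<psi> (rho (transpose L1) w) = rho (transpose L) (transpose \<Theta>1 *v w)"
    if "is_dual_map L L1 \<phi> \<psi>" "properv w" for \<psi> w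
  proof -
    have "rho (transpose L1) w \<in> U (transpose L1)"
      using \<open>properv w\<close> by (simp add: U_def)
    then show ?thesis
      using dual_map_unique[OF det_L that(1) dual] dual_map_rho[OF \<open>properv w\<close>] by simp
  qed
  with dual show ?thesis
    by blast
qed

end
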